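(* Let $\mathcal A$ be a weighted ODCA over $\mathbb F$, $K=|Q|\cdot|C|$, $c$ a configuration with counter value $n$, $V\subseteq\mathbb F^{|Q|}$ a subspace and $S\subseteq C$. If $z$ is a minimal witness for $(c,\overline V,S,\mathbb N)$, then $|z|\le K\cdot(\max(n,K)+K^2)$.
   Context: Fix a field $\mathbb{F}$ and a finite alphabet $\Sigma$. For $n\in\mathbb N$ let $\mathrm{sgn}(n)=0$ if $n=0$ and $1$ if $n>0$. A weighted ODCA is $\mathcal{A}=((C,\delta_0,\delta_1,p_0),(Q,\lambda,\Delta,\eta))$ where $C$ is a finite nonempty set of counter states, $\delta_0:C\times\Sigma\to C\times\{0,+1\}$ and $\delta_1:C\times\Sigma\to C\times\{-1,0,+1\}$ are deterministic counter transition functions, $p_0\in C$, $Q$ is a finite nonempty set of states, $\lambda,\eta\in\mathbb{F}^{|Q|}$, and $\Delta:\Sigma\times\{0,1\}\to\mathbb{F}^{|Q|\times|Q|}$. A configuration is a triple $(x,p,n)\in\mathbb{F}^{|Q|}\times C\times\mathbb{N}$ (weight vector, counter state, counter value). Reading $a\in\Sigma$ from $(x,p,n)$ with $d=\mathrm{sgn}(n)$ and $\delta_d(p,a)=(p',e)$ leads to $(x\Delta(a,d),p',n+e)$; for each word $w$ and configuration $c$ there is a unique run of $w$ from $c$. For a subspace $V\subseteq\mathbb F^{|Q|}$ let $\overline V=\mathbb F^{|Q|}\setminus V$. For $S\subseteq C$ and $X\subseteq\mathbb N$, a word $z$ is a witness for $(c,\overline V,S,X)$ if the run of $z$ from $c$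 ends in a configuration $(x,p,n)$ with $x\in\overline V$, $p\in S$, $n\in X$; it is a minimal witness if no strictly shorter word is a witness. *)

theory Defs
  imports Main
begin

(* Weight vectors in F^{|Q|} are functions 'q => 'a with 'q a finite type (the state set Q);
   matrices in F^{|Q| x |Q|} are functions 'q => 'q => 'a. *)

type_synonym ('q,'a) fvec = "'q \<Rightarrow> 'a"
type_synonym ('q,'a) fmat = "'q \<Rightarrow> 'q \<Rightarrow> 'a"

definition vec_mat :: "('q::finite,'a::field) fvec \<Rightarrow> ('q,'a) fmat \<Rightarrow> ('q,'a) fvec" where
  "vec_mat x M = (\<lambda>j. \<Sum>i\<in>UNIV. x i * M i j)"

definition is_subspace :: "('q,'a::field) fvec set \<Rightarrow> bool" where
  "is_subspace V \<longleftrightarrow> (\<lambda>_. 0) \<in> V \<and> (\<forall>x\<in>V. \<forall>y\<in>V. (\<lambda>i. x i + y i) \<in> V)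
     \<and> (\<forall>c. \<forall>x\<in>V. (\<lambda>i. c * x i) \<in> V)"

definition sgnN :: "nat \<Rightarrow> nat" where
  "sgnN n = (if n = 0 then 0 else 1)"

(* A weighted ODCA ((C, delta0, delta1, p0), (Q, lambda, Delta, eta)); C = UNIV::'c, Q = UNIV::'q. *)
definition wodca ::
  "('c::finite \<Rightarrow> 's::finite \<Rightarrow> 'c \<times> int) \<Rightarrow> ('c \<Rightarrow> 's \<Rightarrow> 'c \<times> int) \<Rightarrow> 'c \<Rightarrow>
   ('q::finite,'a::field) fvec \<Rightarrow> ('s \<Rightarrow> nat \<Rightarrow> ('q,'a) fmat) \<Rightarrow> ('q,'a) fvec \<Rightarrow> bool" where
  "wodca \<delta>0 \<delta>1 p0 lamv \<Delta> \<eta> \<longleftrightarrow>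
     (\<forall>p a. snd (\<delta>0 p a) \<in> {0, 1}) \<and> (\<forall>p a. snd (\<delta>1 p a) \<in> {-1, 0, 1})"

type_synonym ('q,'a,'c) config = "('q,'a) fvec \<times> 'c \<times> nat"

definition step ::
  "('c \<Rightarrow> 's \<Rightarrow> 'c \<times> int) \<Rightarrow> ('c \<Rightarrow> 's \<Rightarrow> 'c \<times> int) \<Rightarrow> ('s \<Rightarrow> nat \<Rightarrow> ('q::finite,'a::field) fmat)
   \<Rightarrow> ('q,'a,'c) config \<Rightarrow> 's \<Rightarrow> ('q,'a,'c) config" where
  "step \<delta>0 \<delta>1 \<Delta> cf a =
     (case cf of (x, p, n) \<Rightarrow>
        let d = sgnN n; pe = (if d = 0 then \<delta>0 p a else \<delta>1 p a)
        in (vec_mat x (\<Delta> a d), fst pe, nat (int n + snd pe)))"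

definition run ::
  "('c \<Rightarrow> 's \<Rightarrow> 'c \<times> int) \<Rightarrow> ('c \<Rightarrow> 's \<Rightarrow> 'c \<times> int) \<Rightarrow> ('s \<Rightarrow> nat \<Rightarrow> ('q::finite,'a::field) fmat)
   \<Rightarrow> ('q,'a,'c) config \<Rightarrow> 's list \<Rightarrow> ('q,'a,'c) config" where
  "run \<delta>0 \<delta>1 \<Delta> cf w = foldl (step \<delta>0 \<delta>1 \<Delta>) cf w"

(* z is a witness for (c, complement of V, S, X) *)
definition witness where
  "witness \<delta>0 \<delta>1 \<Delta> cf V S X z \<longleftrightarrow>
     (case run \<delta>0 \<delta>1 \<Delta> cf z of (x, p, n) \<Rightarrow> x \<notin> V \<and> p \<in> S \<and> n \<in> X)"

definition minimal_witness where
  "minimal_witness \<delta>0 \<delta>1 \<Delta> cf V S X z \<longleftrightarrow>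
     witness \<delta>0 \<delta>1 \<Delta> cf V S X z \<and>
     (\<forall>z'. length z' < length z \<longrightarrow> \<not> witness \<delta>0 \<delta>1 \<Delta> cf V S X z')"

end

theory Submission
  imports Defs "HOL-Library.Function_Algebras" "HOL-Library.Cardinality" "HOL.Vector_Spaces"
begin

(* Write K = |Q| |C| and L = |z|.  The weight vectors from which no witness shorter than k starts
   form a subspace, shrinking as k grows, and the weight at position i of z lies in the subspace for
   L - i but not in the one for L - i + 1.  So each pair (counter state, counter value) is visited at
   most |Q| times, and fewer than K positions share a counter value.
   While the counter stays positive the automaton acts as a finite weighted automaton on C x Q, whose
   subspaces stabilise within K steps: once the counter is at least K - 1 and never returns to zero,
   fewer than K letters remain.
   If the counter does return to zero after position s, each level h with max(n,1) < h <= counter(s)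
   is crossed by a hill, the stretch of z around s on which the counter is at least h.
   Replacing a hill by an inner one with the same end states gives a shorter
   word, so the transfer matrices of such hills are triangularly independent, and there are at most
   K^2 levels.  Counting positions by counter value gives the bound. *)

section \<open>Functions into a field as a vector space\<close>

definition unit_vec :: "'i \<Rightarrow> 'i \<Rightarrow> 'a::field" where
  "unit_vec j = (\<lambda>i. if i = j then 1 else 0)"

interpretation fv: vector_space "\<lambda>(c::'a::field) (f::'i \<Rightarrow> 'a) i. c * f i"
  by unfold_locales (auto simp: fun_eq_iff algebra_simps)

lemma fv_subspace_iff: "fv.subspace V \<longleftrightarrow> is_subspace V"
  by (simp add: is_subspace_def fv.subspace_def zero_fun_def plus_fun_def)

abbreviation fun_linear :: "(('i \<Rightarrow> 'a::field) \<Rightarrow> 'j \<Rightarrow> 'a) \<Rightarrow> bool" where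
  "fun_linear \<equiv> Vector_Spaces.linear (\<lambda>c x i. c * x i) (\<lambda>c x i. c * x i)"

lemma fun_linearI:
  assumes "\<And>x y. f (x + y) = f x + f y" and "\<And>c x. f (\<lambda>i. c * x i) = (\<lambda>i. c * f x i)"
  shows "fun_linear f"
  by (intro linear_module_homI module_hom.intro module_hom_axioms.intro fv.module_axioms) (use assms in auto)

lemma subspace_vimage_linear:
  "fun_linear f \<Longrightarrow> fv.subspace V \<Longrightarrow> fv.subspace (f -` V)"
  by (rule module_hom.subspace_vimage) (simp add: module_hom_iff_linear)

lemma unit_vec_inj: "inj unit_vec"
  by (auto simp: inj_def unit_vec_def fun_eq_iff)

lemma sum_fun_apply: "(\<Sum>x\<in>A. f x) i = (\<Sum>x\<in>A. f x i)"
  by (induction A rule: infinite_finite_induct) auto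

lemma sum_unit_vec: "(\<Sum>j\<in>UNIV. (\<lambda>i. y j * unit_vec j i)) = (y :: 'i::finite \<Rightarrow> 'a::field)"
  by (auto simp: fun_eq_iff sum_fun_apply unit_vec_def if_distrib cong: if_cong)

interpretation fvf: finite_dimensional_vector_space "\<lambda>(c::'a::field) (f::'i::finite \<Rightarrow> 'a) i. c * f i"
   "range unit_vec"
proof
  show "finite (range (unit_vec :: 'i \<Rightarrow> 'i \<Rightarrow> 'a))" by simp
  show "fv.independent (range (unit_vec :: 'i \<Rightarrow> 'i \<Rightarrow> 'a))"
  proof (rule fv.independent_if_scalars_zero)
    fix f :: "('i \<Rightarrow> 'a) \<Rightarrow> 'a" and x :: "'i \<Rightarrow> 'a"
    assume sum0: "(\<Sum>x\<in>range unit_vec. (\<lambda>i. f x * x i)) = 0" and "x \<in> range unit_vec"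
    then obtain j where j: "x = unit_vec j" by auto
    have "(\<Sum>x\<in>range (unit_vec :: 'i \<Rightarrow> 'i \<Rightarrow> 'a). (\<lambda>i. f x * x i)) j
        = (\<Sum>k\<in>UNIV. f (unit_vec k) * unit_vec k j)"
      by (simp add: sum_fun_apply sum.reindex[OF unit_vec_inj])
    also have "\<dots> = f (unit_vec j)"
      by (simp add: unit_vec_def if_distrib cong: if_cong)
    finally show "f x = 0" using sum0 j by simp
  qed simp
  show "fv.span (range (unit_vec :: 'i \<Rightarrow> 'i \<Rightarrow> 'a)) = UNIV"
  proof safe
    fix y :: "'i \<Rightarrow> 'a"
    have "(\<Sum>j\<in>UNIV. (\<lambda>i. y j * unit_vec j i)) \<in> fv.span (range (unit_vec :: 'i \<Rightarrow> 'i \<Rightarrow> 'a))"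
      by (intro fv.span_sum fv.span_scale) (auto intro: fv.span_base)
    then show "y \<in> fv.span (range unit_vec)" by (simp add: sum_unit_vec)
  qed simp
qed

lemma fv_dim_le_card: "fv.dim (U :: ('i::finite \<Rightarrow> 'a::field) set) \<le> CARD('i)"
  using fvf.dim_subset_UNIV[of U] by (simp add: fvf.dimension_def card_image[OF unit_vec_inj])

lemma fv_dim_less_card:
  assumes "fv.subspace U" and "U \<noteq> (UNIV :: ('i::finite \<Rightarrow> 'a::field) set)"
  shows "fv.dim U < CARD('i)"
proof -
  have "fv.span U \<subset> fv.span UNIV" using assms by (simp add: fv.span_eq_iff[THEN iffD2] less_le)
  then have "fv.dim U < fv.dim (UNIV :: ('i \<Rightarrow> 'a) set)" by (rule fvf.dim_psubset)
  then show ?thesis using fv_dim_le_card[of "UNIV :: ('i \<Rightarrow> 'a) set"] by simp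
qed

lemma card_le_dim_triangular:
  fixes v :: "'k::linorder \<Rightarrow> 'i::finite \<Rightarrow> 'a::field"
  assumes "finite H" and "v ` H \<subseteq> U"
    and "\<And>h. h \<in> H \<Longrightarrow> fv.subspace (P h)"
    and "\<And>h h'. h \<in> H \<Longrightarrow> h' \<in> H \<Longrightarrow> h < h' \<Longrightarrow> v h' \<in> P h"
    and "\<And>h. h \<in> H \<Longrightarrow> v h \<notin> P h"
  shows "card H \<le> fv.dim U"
proof -
  have "card H \<le> fv.dim (v ` H)"
    using assms(1,3-5)
  proof (induction H rule: finite_linorder_min_induct)
    case (insert h H)
    have "fv.span (v ` H) \<subseteq> P h"
      using insert by (intro fv.span_minimal) auto
    then have "v h \<notin> fv.span (v ` H)" using insert.prems(3) by auto
    then have "fv.dim (v ` insert h H) = fv.dim (v ` H) + 1" by (simp add: fvf.dim_insert)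
    moreover have "card (insert h H) = card H + 1" using insert by auto
    ultimately show ?case using insert by simp
  qed simp
  also have "\<dots> \<le> fv.dim U" using assms(2) by (rule fvf.dim_subset)
  finally show ?thesis .
qed

section \<open>Weights are linear, counters are independent of the weights\<close>

definition mat_mult :: "('q::finite,'a::field) fmat \<Rightarrow> ('q,'a) fmat \<Rightarrow> ('q,'a) fmat" where
  "mat_mult A B = (\<lambda>i k. \<Sum>j\<in>UNIV. A i j * B j k)"

definition mat_one :: "('q,'a::field) fmat" where
  "mat_one = (\<lambda>i j. if i = j then 1 else 0)"

lemma vec_mat_mat_mult: "vec_mat (vec_mat x A) B = vec_mat x (mat_mult A B)"
proof
  fix k
  have "vec_mat (vec_mat x A) B k = (\<Sum>j\<in>UNIV. \<Sum>i\<in>UNIV. x i * A i j * B j k)"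
    by (simp add: vec_mat_def sum_distrib_right)
  also have "\<dots> = (\<Sum>i\<in>UNIV. x i * (\<Sum>j\<in>UNIV. A i j * B j k))"
    by (subst sum.swap) (simp add: sum_distrib_left mult.assoc)
  finally show "vec_mat (vec_mat x A) B k = vec_mat x (mat_mult A B) k"
    by (simp add: vec_mat_def mat_mult_def)
qed

lemma vec_mat_one [simp]: "vec_mat x mat_one = x"
  by (simp add: vec_mat_def mat_one_def fun_eq_iff if_distrib cong: if_cong)

lemma linear_vec_mat: "fun_linear (\<lambda>x. vec_mat x M)"
  by (rule fun_linearI)
    (simp_all add: vec_mat_def fun_eq_iff distrib_right sum.distrib sum_distrib_left mult.assoc)

lemma linear_vec_mat_curry: "fun_linear (\<lambda>X. vec_mat x (curry X))"
  by (rule fun_linearI)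
    (simp_all add: vec_mat_def fun_eq_iff distrib_left sum.distrib sum_distrib_left mult.left_commute)

lemma linear_row: "fun_linear (\<lambda>Y l. Y (q, l))"
  by (rule fun_linearI) auto

definition counter_step :: "('c \<Rightarrow> 's \<Rightarrow> 'c \<times> int) \<Rightarrow> ('c \<Rightarrow> 's \<Rightarrow> 'c \<times> int) \<Rightarrow> 'c \<times> nat \<Rightarrow> 's \<Rightarrow> 'c \<times> nat"
  where "counter_step d0 d1 cm a =
    (case cm of (q, m) \<Rightarrow> let e = (if sgnN m = 0 then d0 q a else d1 q a) in (fst e, nat (int m + snd e)))"

definition counter_run :: "('c \<Rightarrow> 's \<Rightarrow> 'c \<times> int) \<Rightarrow> ('c \<Rightarrow> 's \<Rightarrow> 'c \<times> int) \<Rightarrow> 'c \<times> nat \<Rightarrow> 's list \<Rightarrow> 'c \<times> nat"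
  where "counter_run d0 d1 cm w = foldl (counter_step d0 d1) cm w"

fun run_matrix :: "('c \<Rightarrow> 's \<Rightarrow> 'c \<times> int) \<Rightarrow> ('c \<Rightarrow> 's \<Rightarrow> 'c \<times> int) \<Rightarrow> ('s \<Rightarrow> nat \<Rightarrow> ('q::finite,'a::field) fmat)
    \<Rightarrow> 'c \<times> nat \<Rightarrow> 's list \<Rightarrow> ('q,'a) fmat" where
  "run_matrix d0 d1 D cm [] = mat_one"
| "run_matrix d0 d1 D cm (a # w) =
     mat_mult (D a (sgnN (snd cm))) (run_matrix d0 d1 D (counter_step d0 d1 cm a) w)"

lemma counter_run_Nil [simp]: "counter_run d0 d1 cm [] = cm"
  by (simp add: counter_run_def)

lemma counter_run_Cons [simp]: "counter_run d0 d1 cm (a # w) = counter_run d0 d1 (counter_step d0 d1 cm a) w"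
  by (simp add: counter_run_def)

lemma counter_step_pos:
  "0 < m \<Longrightarrow> counter_step d0 d1 (q, m) a = (fst (d1 q a), nat (int m + snd (d1 q a)))"
  by (simp add: counter_step_def sgnN_def Let_def)

lemma counter_step_bounds:
  assumes "snd (d0 q a) \<in> {0, 1}" and "snd (d1 q a) \<in> {-1, 0, 1}"
  shows "snd (counter_step d0 d1 (q, m) a) \<le> Suc m" "m \<le> Suc (snd (counter_step d0 d1 (q, m) a))"
  using assms by (auto simp: counter_step_def Let_def sgnN_def)

lemma run_Nil [simp]: "run d0 d1 D cf [] = cf"
  by (simp add: run_def)

lemma run_Cons [simp]: "run d0 d1 D cf (a # w) = run d0 d1 D (step d0 d1 D cf a) w"
  by (simp add: run_def)

lemma run_append: "run d0 d1 D cf (u @ w) = run d0 d1 D (run d0 d1 D cf u) w"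
  by (simp add: run_def)

lemma step_eq: "step d0 d1 D (x, cm) a = (vec_mat x (D a (sgnN (snd cm))), counter_step d0 d1 cm a)"
  by (simp add: step_def counter_step_def Let_def split: prod.split)

lemma run_eq: "run d0 d1 D (x, cm) w = (vec_mat x (run_matrix d0 d1 D cm w), counter_run d0 d1 cm w)"
  by (induction w arbitrary: x cm) (simp_all add: step_eq vec_mat_mat_mult)

lemma witness_iff:
  "witness d0 d1 D (x, cm) V S X w \<longleftrightarrow>
     vec_mat x (run_matrix d0 d1 D cm w) \<notin> V \<and> fst (counter_run d0 d1 cm w) \<in> S \<and> snd (counter_run d0 d1 cm w) \<in> X"
  by (simp add: witness_def run_eq split: prod.split)

lemma witness_Cons:
  "witness d0 d1 D cf V S X (a # w) = witness d0 d1 D (step d0 d1 D cf a) V S X w"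
  by (simp add: witness_def)

section \<open>Safe vectors\<close>

definition safe_vectors ::
  "('c \<Rightarrow> 's \<Rightarrow> 'c \<times> int) \<Rightarrow> ('c \<Rightarrow> 's \<Rightarrow> 'c \<times> int) \<Rightarrow> ('s \<Rightarrow> nat \<Rightarrow> ('q::finite,'a::field) fmat)
   \<Rightarrow> ('q,'a) fvec set \<Rightarrow> 'c set \<Rightarrow> nat \<Rightarrow> 'c \<times> nat \<Rightarrow> ('q,'a) fvec set" where
  "safe_vectors d0 d1 D V S k cm = {x. \<forall>w. length w < k \<longrightarrow> \<not> witness d0 d1 D (x, cm) V S UNIV w}"

lemma subspace_safe_vectors:
  assumes "fv.subspace V"
  shows "fv.subspace (safe_vectors d0 d1 D V S k cm)"
proof -
  have "safe_vectors d0 d1 D V S k cm =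
      (\<Inter>w\<in>{w. length w < k \<and> fst (counter_run d0 d1 cm w) \<in> S}. (\<lambda>x. vec_mat x (run_matrix d0 d1 D cm w)) -` V)"
    by (auto simp: safe_vectors_def witness_iff)
  then show ?thesis
    using assms by (auto intro!: fv.subspace_Inter subspace_vimage_linear linear_vec_mat)
qed

lemma safe_vectors_0 [simp]: "safe_vectors d0 d1 D V S 0 cm = UNIV"
  by (simp add: safe_vectors_def)

lemma safe_vectors_antimono:
  "k \<le> k' \<Longrightarrow> safe_vectors d0 d1 D V S k' cm \<subseteq> safe_vectors d0 d1 D V S k cm"
  by (auto simp: safe_vectors_def)

lemma all_shorter_words_iff:
  "(\<forall>w. length w < Suc k \<longrightarrow> P w) \<longleftrightarrow> P [] \<and> (\<forall>a w. length w < k \<longrightarrow> P (a # w))"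
proof
  assume "\<forall>w. length w < Suc k \<longrightarrow> P w"
  then show "P [] \<and> (\<forall>a w. length w < k \<longrightarrow> P (a # w))" by simp
next
  assume "P [] \<and> (\<forall>a w. length w < k \<longrightarrow> P (a # w))"
  then show "\<forall>w. length w < Suc k \<longrightarrow> P w" by (metis length_Cons list.exhaust not_less_eq)
qed

lemma safe_vectors_Suc:
  "x \<in> safe_vectors d0 d1 D V S (Suc k) (q, m) \<longleftrightarrow>
     (q \<in> S \<longrightarrow> x \<in> V) \<and>
     (\<forall>a. vec_mat x (D a (sgnN m)) \<in> safe_vectors d0 d1 D V S k (counter_step d0 d1 (q, m) a))"
  unfolding safe_vectors_def mem_Collect_eq all_shorter_words_iff by (simp add: witness_Cons step_eq witness_iff) blast

lemma safe_vectors_1: "safe_vectors d0 d1 D V S 1 (q, m) = {x. q \<in> S \<longrightarrow> x \<in> V}"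
  using safe_vectors_Suc[of _ d0 d1 D V S 0 q m] by auto

(* Either run being in the positive regime suffices, since the two counters differ by d. *)
lemma counter_run_shift:
  assumes dec: "\<And>q a. -1 \<le> snd (d1 q a)"
    and pos: "\<forall>t<length w. 0 < snd (counter_run d0 d1 (q, m) (take t w))
                          \<or> d < snd (counter_run d0 d1 (q, m + d) (take t w))"
  shows "counter_run d0 d1 (q, m + d) w = (fst (counter_run d0 d1 (q, m) w), snd (counter_run d0 d1 (q, m) w) + d)
       \<and> run_matrix d0 d1 D (q, m + d) w = run_matrix d0 d1 D (q, m) w"
  using pos
proof (induction w arbitrary: q m)
  case (Cons a w)
  have "0 < m" using Cons.prems[rule_format, of 0] by auto
  then have m: "sgnN m = 1" "sgnN (m + d) = 1"
    and step: "counter_step d0 d1 (q, m) a = (fst (d1 q a), nat (int m + snd (d1 q a)))"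
      "counter_step d0 d1 (q, m + d) a = (fst (d1 q a), nat (int m + snd (d1 q a)) + d)"
    using dec[of q a] by (auto simp: sgnN_def counter_step_pos)
  have "\<forall>t<length w. 0 < snd (counter_run d0 d1 (fst (d1 q a), nat (int m + snd (d1 q a))) (take t w))
      \<or> d < snd (counter_run d0 d1 (fst (d1 q a), nat (int m + snd (d1 q a)) + d) (take t w))"
    using Cons.prems[rule_format, of "Suc _"] step by auto
  from Cons.IH[OF this] show ?case by (simp add: m step)
qed simp

(* Words shorter than k, read from a counter value of at least k - 1, never see the counter at 0. *)
lemma safe_vectors_counter_indep:
  assumes dec: "\<And>q a. -1 \<le> snd (d1 q a)"
  shows "k \<le> Suc m \<Longrightarrow> k \<le> Suc m' \<Longrightarrow>
    safe_vectors d0 d1 D V S k (q, m) = safe_vectors d0 d1 D V S k (q, m')"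
proof (induction k arbitrary: q m m')
  case 0
  then show ?case by simp
next
  case (Suc k)
  show ?case
  proof (cases k)
    case 0
    then show ?thesis using safe_vectors_1[of d0 d1 D V S] by (simp add: One_nat_def)
  next
    case (Suc k')
    then have "0 < m" "0 < m'" using Suc.prems by auto
    moreover have "safe_vectors d0 d1 D V S k (fst (d1 q a), nat (int m + snd (d1 q a)))
        = safe_vectors d0 d1 D V S k (fst (d1 q a), nat (int m' + snd (d1 q a)))" for a
      using Suc.prems dec[of q a] by (intro Suc.IH) auto
    ultimately show ?thesis by (auto simp: safe_vectors_Suc counter_step_pos sgnN_def)
  qed
qed

section \<open>Stabilisation at high counter values\<close>

lemma descending_subspace_chain_stable:
  fixes E :: "nat \<Rightarrow> ('i::finite \<Rightarrow> 'a::field) set"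
  assumes sub: "\<And>k. fv.subspace (E k)" and dec: "\<And>k. E (Suc k) \<subseteq> E k"
    and step: "\<And>k. E k = E (Suc k) \<Longrightarrow> E (Suc k) = E (Suc (Suc k))"
    and k: "CARD('i) \<le> k"
  shows "E k = E CARD('i)"
proof -
  have "\<exists>j\<le>CARD('i). E (Suc j) = E j"
  proof (rule ccontr)
    assume "\<not> ?thesis"
    then have strict: "\<exists>y. y \<in> E j - E (Suc j)" if "j \<le> CARD('i)" for j
      using that dec by blast
    define v where "v j = (SOME y. y \<in> E j - E (Suc j))" for j
    have v: "v j \<in> E j - E (Suc j)" if "j \<le> CARD('i)" for j
      unfolding v_def using strict[OF that] by (rule someI_ex)
    have "card {..CARD('i)} \<le> fv.dim (UNIV :: ('i \<Rightarrow> 'a) set)"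
    proof (rule card_le_dim_triangular[where P = "\<lambda>j. E (Suc j)"])
      show "v j' \<in> E (Suc j)" if "j \<in> {..CARD('i)}" "j' \<in> {..CARD('i)}" "j < j'" for j j'
        using v[of j'] lift_Suc_antimono_le[of E, OF dec, of "Suc j" j'] that by auto
    qed (use v sub in auto)
    then show False using fv_dim_le_card[of "UNIV :: ('i \<Rightarrow> 'a) set"] by simp
  qed
  then obtain j where j: "j \<le> CARD('i)" "E (Suc j) = E j" by blast
  have "E (j + t) = E j \<and> E (Suc (j + t)) = E j" for t
  proof (induction t)
    case (Suc t)
    then show ?case using step[of "j + t"] by simp
  qed (use j in simp)
  from this[of "k - j"] this[of "CARD('i) - j"] show ?thesis using j k by simp
qed

context
  fixes d0 d1 :: "'c::finite \<Rightarrow> 's \<Rightarrow> 'c \<times> int" and D :: "'s \<Rightarrow> nat \<Rightarrow> ('q::finite,'a::field) fmat"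
    and V :: "('q,'a) fvec set" and S :: "'c set"
  assumes dec: "\<And>q a. -1 \<le> snd (d1 q a)" and subV: "fv.subspace V"
begin

(* At counter value k only the positive transitions matter for words shorter than k, so these
   tables evolve like the safe sets of a finite weighted automaton on C x Q. *)
definition safe_table :: "nat \<Rightarrow> ('c \<times> 'q \<Rightarrow> 'a) set" where
  "safe_table k = {Y. \<forall>q. (\<lambda>l. Y (q, l)) \<in> safe_vectors d0 d1 D V S k (q, k)}"

lemma subspace_safe_table: "fv.subspace (safe_table k)"
proof -
  have "safe_table k = (\<Inter>q. (\<lambda>Y l. Y (q, l)) -` safe_vectors d0 d1 D V S k (q, k))"
    by (auto simp: safe_table_def)
  then show ?thesis
    by (auto intro!: fv.subspace_Inter subspace_vimage_linear linear_row subspace_safe_vectors subV)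
qed

lemma safe_table_Suc_subset: "safe_table (Suc k) \<subseteq> safe_table k"
proof -
  have "safe_vectors d0 d1 D V S (Suc k) (q, Suc k) \<subseteq> safe_vectors d0 d1 D V S k (q, Suc k)" for q
    by (rule safe_vectors_antimono) simp
  also have "safe_vectors d0 d1 D V S k (q, Suc k) = safe_vectors d0 d1 D V S k (q, k)" for q
    by (rule safe_vectors_counter_indep[OF dec]) simp_all
  finally have "safe_vectors d0 d1 D V S (Suc k) (q, Suc k) \<subseteq> safe_vectors d0 d1 D V S k (q, k)" for q .
  then show ?thesis by (auto simp: safe_table_def)
qed

lemma safe_vectors_eq_if_safe_table_eq:
  assumes "safe_table k = safe_table k'"
  shows "safe_vectors d0 d1 D V S k (q, k) = safe_vectors d0 d1 D V S k' (q, k')"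
proof -
  have zero: "(\<lambda>_. 0) \<in> safe_vectors d0 d1 D V S n cm" for n cm
    using fv.subspace_0[OF subspace_safe_vectors[OF subV]] by (simp add: zero_fun_def)
  have row: "(\<lambda>l. if P then x l else 0) = (if P then x else (\<lambda>_. 0))" for P and x :: "'q \<Rightarrow> 'a"
    by auto
  have "x \<in> safe_vectors d0 d1 D V S n (q, n) \<longleftrightarrow> (\<lambda>(q', l). if q' = q then x l else 0) \<in> safe_table n"
    for x n
    using zero by (auto simp: safe_table_def row)
  then show ?thesis using assms by blast
qed

lemma safe_table_step:
  assumes "safe_table k = safe_table (Suc k)"
  shows "safe_table (Suc k) = safe_table (Suc (Suc k))"
proof -
  have "safe_vectors d0 d1 D V S (Suc (Suc k)) (q, Suc (Suc k)) = safe_vectors d0 d1 D V S (Suc k) (q, Suc k)" for q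
  proof -
    have "safe_vectors d0 d1 D V S n (counter_step d0 d1 (q, Suc n) a) = safe_vectors d0 d1 D V S n (fst (d1 q a), n)"
      for n a using dec[of q a] by (simp add: counter_step_pos safe_vectors_counter_indep[of d1, OF dec])
    then show ?thesis
      using safe_vectors_eq_if_safe_table_eq[OF assms] by (auto simp: set_eq_iff safe_vectors_Suc sgnN_def)
  qed
  then show ?thesis by (simp add: safe_table_def)
qed

lemma safe_vectors_stable:
  assumes "CARD('q) * CARD('c) \<le> k"
  shows "safe_vectors d0 d1 D V S k (q, k) = safe_vectors d0 d1 D V S (CARD('q) * CARD('c)) (q, CARD('q) * CARD('c))"
proof (rule safe_vectors_eq_if_safe_table_eq)
  have card: "CARD('c \<times> 'q) = CARD('q) * CARD('c)"
    by (simp add: mult.commute[of "CARD('c)"])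
  show "safe_table k = safe_table (CARD('q) * CARD('c))"
    using descending_subspace_chain_stable[where E = safe_table, OF subspace_safe_table safe_table_Suc_subset safe_table_step]
      assms unfolding card by blast
qed

end

section \<open>Positions of a minimal witness\<close>

locale min_witness =
  fixes d0 d1 :: "'c::finite \<Rightarrow> 's \<Rightarrow> 'c \<times> int"
    and D :: "'s \<Rightarrow> nat \<Rightarrow> ('q::finite, 'a::field) fmat"
    and c0 :: "('q,'a,'c) config" and V :: "('q,'a) fvec set" and S :: "'c set" and z :: "'s list"
  assumes inc: "\<And>q a. snd (d0 q a) \<in> {0, 1}" and dec: "\<And>q a. snd (d1 q a) \<in> {-1, 0, 1}"
    and subV: "fv.subspace V"
    and min: "minimal_witness d0 d1 D c0 V S UNIV z"
begin

abbreviation "L \<equiv> length z"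
abbreviation "safe \<equiv> safe_vectors d0 d1 D V S"

lemma dec_ge: "-1 \<le> snd (d1 q a)"
  using dec[of q a] by auto

definition cfg :: "nat \<Rightarrow> ('q,'a,'c) config" where
  "cfg i = run d0 d1 D c0 (take i z)"

definition "weight i = fst (cfg i)"
definition "state i = fst (snd (cfg i))"
definition "counter i = snd (snd (cfg i))"

lemma cfg_eq: "cfg i = (weight i, state i, counter i)"
  by (simp add: weight_def state_def counter_def)

lemma cfg_add: "run d0 d1 D (cfg i) (take t (drop i z)) = cfg (i + t)"
  by (simp add: cfg_def take_add run_append)

lemma cfg_length: "run d0 d1 D (cfg i) (drop i z) = cfg L"
  by (simp add: cfg_def run_append[symmetric])

lemma counter_run_cfg:
  "counter_run d0 d1 (state i, counter i) (take t (drop i z)) = (state (i + t), counter (i + t))"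
  using cfg_add[of i t] by (simp add: cfg_eq run_eq)

lemma counter_run_drop: "counter_run d0 d1 (state i, counter i) (drop i z) = (state L, counter L)"
  using cfg_length[of i] by (simp add: cfg_eq run_eq)

lemma witness_from_cfg: "witness d0 d1 D (cfg i) V S UNIV w \<longleftrightarrow> witness d0 d1 D c0 V S UNIV (take i z @ w)"
  by (simp add: witness_def cfg_def run_append)

lemma no_shorter_witness: "length w < L \<Longrightarrow> \<not> witness d0 d1 D c0 V S UNIV w"
  using min by (simp add: minimal_witness_def)

lemma end_witness: "weight L \<notin> V" "state L \<in> S"
  using min by (auto simp: minimal_witness_def witness_def weight_def state_def cfg_def split: prod.splits)

lemma counter_Suc:
  assumes "i < L"
  shows "counter (Suc i) \<le> Suc (counter i)" "counter i \<le> Suc (counter (Suc i))"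
proof -
  have "take 1 (drop i z) = [z ! i]"
    using assms by (simp add: Cons_nth_drop_Suc[symmetric])
  then have "counter_step d0 d1 (state i, counter i) (z ! i) = (state (Suc i), counter (Suc i))"
    using counter_run_cfg[of i 1] by simp
  then have "snd (counter_step d0 d1 (state i, counter i) (z ! i)) = counter (Suc i)"
    by simp
  then show "counter (Suc i) \<le> Suc (counter i)" "counter i \<le> Suc (counter (Suc i))"
    using counter_step_bounds[of d0 "state i" "z ! i" d1 "counter i", OF inc dec] by auto
qed

lemma weight_in_safe: "weight i \<in> safe (L - i) (state i, counter i)"
  unfolding safe_vectors_def mem_Collect_eq
proof (intro allI impI)
  fix w :: "'s list"
  assume "length w < L - i"
  then have "length (take i z @ w) < L" by simp
  then show "\<not> witness d0 d1 D (weight i, state i, counter i) V S UNIV w"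
    using no_shorter_witness witness_from_cfg[of i w] by (simp add: cfg_eq)
qed

lemma weight_notin_safe:
  assumes "i \<le> L"
  shows "weight i \<notin> safe (Suc (L - i)) (state i, counter i)"
proof -
  have "witness d0 d1 D (cfg i) V S UNIV (drop i z)"
    using cfg_length[of i] end_witness by (simp add: witness_def cfg_eq)
  moreover have "length (drop i z) < Suc (L - i)" by simp
  ultimately show ?thesis unfolding safe_vectors_def cfg_eq by blast
qed

lemma dim_safe_vectors_1: "fv.dim (safe 1 (q, m)) \<le> CARD('q) - (if q \<in> S then 1 else 0)"
proof (cases "q \<in> S")
  case True
  then have "safe 1 (q, m) = V" using safe_vectors_1[of d0 d1 D V S q m] by auto
  moreover have "V \<noteq> UNIV" using end_witness(1) by auto
  ultimately show ?thesis using fv_dim_less_card[OF subV] True by fastforce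
next
  case False
  then show ?thesis using fv_dim_le_card by simp
qed

lemma card_visits_le:
  "card {i. i < L \<and> state i = q \<and> counter i = m} \<le> CARD('q) - (if q \<in> S then 1 else 0)"
proof -
  let ?I = "{i. i < L \<and> state i = q \<and> counter i = m}"
  have "card ((\<lambda>i. L - i) ` ?I) \<le> fv.dim (safe 1 (q, m))"
  proof (rule card_le_dim_triangular[where v = "\<lambda>h. weight (L - h)" and P = "\<lambda>h. safe (Suc h) (q, m)"])
    show "(\<lambda>h. weight (L - h)) ` (\<lambda>i. L - i) ` ?I \<subseteq> safe 1 (q, m)"
    proof clarify
      fix i assume "i < L" "q = state i" "m = counter i"
      then have "1 \<le> L - i" by simp
      from subsetD[OF safe_vectors_antimono[OF this] weight_in_safe[of i]]
      show "weight (L - (L - i)) \<in> safe 1 (state i, counter i)"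
        using \<open>i < L\<close> by simp
    qed
    show "weight (L - h') \<in> safe (Suc h) (q, m)"
      if "h' \<in> (\<lambda>i. L - i) ` ?I" "h < h'" for h h'
    proof -
      from that(1) obtain i where i: "i < L" "state i = q" "counter i = m" "h' = L - i" by auto
      with that(2) have "Suc h \<le> L - i" by linarith
      from subsetD[OF safe_vectors_antimono[OF this] weight_in_safe[of i]] show ?thesis
        using i by (simp add: diff_diff_cancel)
    qed
    show "weight (L - h) \<notin> safe (Suc h) (q, m)" if "h \<in> (\<lambda>i. L - i) ` ?I" for h
    proof -
      from that obtain i where i: "i < L" "state i = q" "counter i = m" "h = L - i" by auto
      then show ?thesis using weight_notin_safe[of i] by simp
    qed
    show "finite ((\<lambda>i. L - i) ` ?I)" by simp
    show "fv.subspace (safe (Suc h) (q, m))" for h by (rule subspace_safe_vectors[OF subV])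
  qed
  moreover have "inj_on (\<lambda>i. L - i) ?I" by (auto simp: inj_on_def)
  then have "card ((\<lambda>i. L - i) ` ?I) = card ?I" by (rule card_image)
  ultimately show ?thesis using dim_safe_vectors_1[of q m] by linarith
qed

lemma card_level_visits_le: "card {i. i < L \<and> counter i = m} \<le> CARD('q) * CARD('c) - 1"
proof -
  let ?f = "\<lambda>q::'c. CARD('q) - (if q \<in> S then 1 else 0)"
  have "{i. i < L \<and> counter i = m} = (\<Union>q. {i. i < L \<and> state i = q \<and> counter i = m})" by blast
  then have "card {i. i < L \<and> counter i = m} \<le> (\<Sum>q\<in>UNIV. card {i. i < L \<and> state i = q \<and> counter i = m})"
    by (simp add: card_UN_le)
  also have "\<dots> \<le> (\<Sum>q\<in>UNIV. ?f q)" by (intro sum_mono card_visits_le)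
  also have "\<dots> = ?f (state L) + (\<Sum>q\<in>UNIV - {state L}. ?f q)" by (rule sum.remove) simp_all
  also have "\<dots> \<le> (CARD('q) - 1) + (\<Sum>q\<in>UNIV - {state L}. CARD('q))"
    using end_witness(2) by (intro add_mono sum_mono) auto
  also have "\<dots> = CARD('q) * CARD('c) - 1"
  proof -
    obtain a b where "CARD('q) = Suc a" "CARD('c) = Suc b"
      using not0_implies_Suc[of "CARD('q)"] not0_implies_Suc[of "CARD('c)"] by auto
    then show ?thesis by (simp add: card_Diff_singleton algebra_simps)
  qed
  finally show ?thesis .
qed

lemma short_tail_if_counter_positive:
  assumes i: "i \<le> L" and big: "CARD('q) * CARD('c) \<le> Suc (counter i)"
    and pos: "\<And>t. i \<le> t \<Longrightarrow> t < L \<Longrightarrow> 0 < counter t"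
  shows "L < i + CARD('q) * CARD('c)"
proof (rule ccontr)
  define K where "K = CARD('q) * CARD('c)"
  define d where "d = L - i"
  assume "\<not> L < i + CARD('q) * CARD('c)"
  then have Kd: "K \<le> d" by (simp add: K_def d_def)
  let ?w = "drop i z" and ?q = "state i" and ?m = "counter i"
  have "\<forall>t<length ?w. 0 < snd (counter_run d0 d1 (?q, ?m) (take t ?w))
      \<or> d < snd (counter_run d0 d1 (?q, ?m + d) (take t ?w))"
  proof (intro allI impI disjI1)
    fix t assume "t < length ?w"
    then show "0 < snd (counter_run d0 d1 (?q, ?m) (take t ?w))"
      using pos[of "i + t"] counter_run_cfg[of i t] by simp
  qed
  \<comment> \<open>Raising the counter by L - i keeps the suffix a witness and makes stabilisation applicable.\<close>
  note shift = counter_run_shift[OF dec_ge this, of D]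
  have "witness d0 d1 D (weight i, ?q, ?m) V S UNIV ?w"
    using cfg_length[of i] end_witness by (simp add: witness_def cfg_eq)
  then have "witness d0 d1 D (weight i, ?q, ?m + d) V S UNIV ?w"
    using shift by (simp add: witness_iff)
  moreover have "length ?w < Suc d" by (simp add: d_def)
  ultimately have "weight i \<notin> safe (Suc d) (?q, ?m + d)"
    unfolding safe_vectors_def by blast
  also have "safe (Suc d) (?q, ?m + d) = safe (Suc d) (?q, Suc d)"
    by (rule safe_vectors_counter_indep[OF dec_ge]) simp_all
  also have "\<dots> = safe K (?q, K)"
    unfolding K_def by (rule safe_vectors_stable[OF dec_ge subV]) (use Kd in \<open>simp add: K_def\<close>)
  also have "\<dots> = safe K (?q, ?m)"
    by (rule safe_vectors_counter_indep[OF dec_ge]) (use big in \<open>simp_all add: K_def\<close>)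
  finally have "weight i \<notin> safe K (?q, ?m)" .
  moreover have "weight i \<in> safe K (?q, ?m)"
    using subsetD[OF safe_vectors_antimono[of K "L - i"] weight_in_safe[of i]] Kd by (simp add: d_def)
  ultimately show False by contradiction
qed

end

section \<open>Hills above a later zero of the counter\<close>

locale min_witness_return = min_witness d0 d1 D c0 V S z
  for d0 d1 :: "'c::finite \<Rightarrow> 's \<Rightarrow> 'c \<times> int"
    and D :: "'s \<Rightarrow> nat \<Rightarrow> ('q::finite, 'a::field) fmat"
    and c0 :: "('q,'a,'c) config" and V :: "('q,'a) fvec set" and S :: "'c set" and z :: "'s list" +
  fixes s j :: nat
  assumes s_le_j: "s \<le> j" and j_less: "j < L" and counter_j: "counter j = 0"
begin

definition last_below :: "nat \<Rightarrow> nat" where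
  "last_below h = Max {t. t < s \<and> counter t < h}"

definition next_below :: "nat \<Rightarrow> nat" where
  "next_below h = Min {t. s < t \<and> t \<le> j \<and> counter t < h}"

lemma last_below:
  assumes "counter 0 < h" "h \<le> counter s"
  shows "last_below h < s" "counter (last_below h) = h - 1"
    and "\<And>t. last_below h < t \<Longrightarrow> t \<le> s \<Longrightarrow> h \<le> counter t"
proof -
  let ?A = "{t. t < s \<and> counter t < h}"
  have "0 \<in> ?A" using assms by (cases s) auto
  moreover have fin: "finite ?A" by simp
  ultimately have u: "last_below h \<in> ?A" unfolding last_below_def by (intro Max_in) auto
  then show "last_below h < s" by simp
  show above: "h \<le> counter t" if "last_below h < t" "t \<le> s" for t
  proof (cases "t = s")
    case False
    have "t \<notin> ?A"
    proof
      assume "t \<in> ?A"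
      from Max_ge[OF fin this] that(1) show False unfolding last_below_def by simp
    qed
    then show ?thesis using that False by simp
  qed (use assms in simp)
  have "counter (Suc (last_below h)) \<le> Suc (counter (last_below h))"
    using u s_le_j j_less by (intro counter_Suc) simp
  moreover have "h \<le> counter (Suc (last_below h))"
    using above u by simp
  ultimately show "counter (last_below h) = h - 1"
    using u by auto
qed

lemma next_below:
  assumes "0 < h" "h \<le> counter s"
  shows "s < next_below h" "next_below h \<le> j" "counter (next_below h) = h - 1"
    and "\<And>t. s \<le> t \<Longrightarrow> t < next_below h \<Longrightarrow> h \<le> counter t"
proof -
  let ?B = "{t. s < t \<and> t \<le> j \<and> counter t < h}"
  have "j \<in> ?B" using assms s_le_j counter_j by (cases "s = j") auto
  moreover have fin: "finite ?B" by simp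
  ultimately have d: "next_below h \<in> ?B" unfolding next_below_def by (intro Min_in) auto
  then show "s < next_below h" "next_below h \<le> j" by simp_all
  show below: "h \<le> counter t" if "s \<le> t" "t < next_below h" for t
  proof (cases "t = s")
    case False
    have "t \<notin> ?B"
    proof
      assume "t \<in> ?B"
      from Min_le[OF fin this] that(2) show False unfolding next_below_def by simp
    qed
    then show ?thesis using that d False by simp
  qed (use assms in simp)
  have "next_below h - 1 < L" using d j_less by auto
  then have "counter (next_below h - 1) \<le> Suc (counter (next_below h))"
    using counter_Suc(2)[of "next_below h - 1"] d by simp
  moreover have "h \<le> counter (next_below h - 1)"
    using d by (intro below) auto
  ultimately show "counter (next_below h) = h - 1"
    using d by auto
qed

(* The lower bound puts the start of z outside every hill and makes h > 1, which keeps the counter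
   positive when a hill is moved down to a lower level. *)
abbreviation levels :: "nat set" where
  "levels \<equiv> {max (counter 0) 1<..counter s}"

lemma levels_nested:
  assumes "h \<in> levels" "h' \<in> levels" "h < h'"
  shows "last_below h < last_below h'" "next_below h' < next_below h"
proof -
  have h: "counter 0 < h" "0 < h" "h \<le> counter s" and h': "counter 0 < h'" "0 < h'" "h' \<le> counter s"
    using assms by auto
  have "last_below h \<in> {t. t < s \<and> counter t < h'}"
    using last_below[OF h(1,3)] assms(3) by simp
  then have "last_below h \<le> last_below h'"
    unfolding last_below_def[of h'] by (intro Max_ge) simp_all
  moreover have "last_below h \<noteq> last_below h'"
    using last_below(2)[OF h(1,3)] last_below(2)[OF h'(1,3)] h(2) assms(3) by auto
  ultimately show "last_below h < last_below h'" by simp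
  have "next_below h \<in> {t. s < t \<and> t \<le> j \<and> counter t < h'}"
    using next_below[OF h(2,3)] assms(3) by simp
  then have "next_below h' \<le> next_below h"
    unfolding next_below_def[of h'] by (intro Min_le) simp_all
  moreover have "next_below h \<noteq> next_below h'"
    using next_below(3)[OF h(2,3)] next_below(3)[OF h'(2,3)] h(2) assms(3) by auto
  ultimately show "next_below h' < next_below h" by simp
qed

definition hill :: "nat \<Rightarrow> 's list" where
  "hill h = take (next_below h - last_below h) (drop (last_below h) z)"

definition hill_matrix :: "nat \<Rightarrow> 'q \<times> 'q \<Rightarrow> 'a" where
  "hill_matrix h = case_prod (run_matrix d0 d1 D (state (last_below h), h - 1) (hill h))"

definition splice_weight :: "nat \<Rightarrow> ('q \<times> 'q \<Rightarrow> 'a) \<Rightarrow> ('q, 'a) fvec" where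
  "splice_weight h X = vec_mat (vec_mat (weight (last_below h)) (curry X))
     (run_matrix d0 d1 D (state (next_below h), h - 1) (drop (next_below h) z))"

lemma subspace_splice_weight_vimage: "fv.subspace {X. splice_weight h X \<in> V}"
proof -
  have "{X. splice_weight h X \<in> V} =
      ((\<lambda>y. vec_mat y (run_matrix d0 d1 D (state (next_below h), h - 1) (drop (next_below h) z)))
        \<circ> (\<lambda>X. vec_mat (weight (last_below h)) (curry X))) -` V"
    by (auto simp: splice_weight_def)
  then show ?thesis
    using subspace_vimage_linear[OF Vector_Spaces.linear_compose[OF linear_vec_mat_curry linear_vec_mat] subV]
    by simp
qed

lemma splice_weight_hill:
  assumes "h \<in> levels"
  shows "splice_weight h (hill_matrix h) = weight L"
proof -
  let ?u = "last_below h" and ?d = "next_below h"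
  have h: "counter 0 < h" "0 < h" "h \<le> counter s" using assms by auto
  have u: "counter ?u = h - 1" "?u < ?d" "?d \<le> L"
    using last_below[OF h(1,3)] next_below[OF h(2,3)] j_less by auto
  have "cfg ?d = run d0 d1 D (weight ?u, state ?u, h - 1) (hill h)"
    using cfg_add[of ?u "?d - ?u"] u by (simp add: hill_def cfg_eq)
  then have "weight ?d = vec_mat (weight ?u) (curry (hill_matrix h))" "counter ?d = h - 1"
    using next_below(3)[OF h(2,3)] by (simp_all add: run_eq hill_matrix_def cfg_eq)
  then show ?thesis
    using cfg_length[of ?d] by (simp add: splice_weight_def cfg_eq run_eq)
qed

lemma length_hill:
  assumes "h \<in> levels"
  shows "length (hill h) = next_below h - last_below h"
  using next_below(2)[of h] j_less assms by (simp add: hill_def)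

lemma counter_run_hill:
  assumes "h \<in> levels" "t \<le> length (hill h)"
  shows "counter_run d0 d1 (state (last_below h), h - 1) (take t (hill h))
    = (state (last_below h + t), counter (last_below h + t))"
proof -
  have "counter (last_below h) = h - 1" using assms(1) last_below(2)[of h] by auto
  then show ?thesis
    using counter_run_cfg[of "last_below h" t] assms by (simp add: hill_def)
qed

lemma counter_inside_hill:
  assumes "h \<in> levels" "last_below h < t" "t < next_below h"
  shows "h \<le> counter t"
proof (cases "t \<le> s")
  case True
  then show ?thesis using assms last_below(3)[of h t] by auto
next
  case False
  then show ?thesis using assms next_below(4)[of h t] by auto
qed

(* Replacing the hill of level h by the inner hill of level h' gives a shorter word;
   by minimality it is no witness. *)
lemma splice_weight_exchange:
  assumes hh: "h \<in> levels" "h' \<in> levels" "h < h'"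
    and ends: "state (last_below h') = state (last_below h)" "state (next_below h') = state (next_below h)"
  shows "splice_weight h (hill_matrix h') \<in> V"
proof -
  let ?u = "last_below h" and ?d = "next_below h" and ?u' = "last_below h'" and ?d' = "next_below h'"
  let ?\<alpha> = "state ?u" and ?\<beta> = "state ?d"
  have h: "counter 0 < h" "1 < h" "h \<le> counter s" and h': "counter 0 < h'" "h' \<le> counter s"
    using hh by auto
  have levels: "h - 1 + (h' - h) = h' - 1" using h hh(3) by simp
  have u: "counter ?u = h - 1" "counter ?u' = h' - 1" "?d' \<le> j" "counter ?d = h - 1" "counter ?d' = h' - 1"
    using last_below(2)[OF h(1,3)] last_below(2)[OF h'] next_below(2,3)[of h'] next_below(3)[of h] h h'
    by auto
  have nest: "?u < ?u'" "?d' < ?d" "?u' < ?d'"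
    using levels_nested[OF hh] last_below(1)[OF h'] next_below(1)[of h'] h' by auto
  have prefix: "\<forall>t<length (hill h'). 0 < snd (counter_run d0 d1 (?\<alpha>, h - 1) (take t (hill h')))
      \<or> h' - h < snd (counter_run d0 d1 (?\<alpha>, h - 1 + (h' - h)) (take t (hill h')))"
  proof (intro allI impI disjI2)
    fix t assume t: "t < length (hill h')"
    have "snd (counter_run d0 d1 (?\<alpha>, h - 1 + (h' - h)) (take t (hill h'))) = counter (?u' + t)"
      using counter_run_hill[OF hh(2), of t] t ends(1) levels by simp
    moreover have "h' - h < counter (?u' + t)"
    proof (cases t)
      case 0
      then show ?thesis using u(2) h hh(3) by simp
    next
      case (Suc t0)
      then have "h' \<le> counter (?u' + t)"
        using counter_inside_hill[OF hh(2)] t length_hill[OF hh(2)] by simp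
      then show ?thesis using h hh(3) by simp
    qed
    ultimately show "h' - h < snd (counter_run d0 d1 (?\<alpha>, h - 1 + (h' - h)) (take t (hill h')))" by simp
  qed
  have shift: "counter_run d0 d1 (?\<alpha>, h' - 1) (hill h')
        = (fst (counter_run d0 d1 (?\<alpha>, h - 1) (hill h')), snd (counter_run d0 d1 (?\<alpha>, h - 1) (hill h')) + (h' - h))"
      "run_matrix d0 d1 D (?\<alpha>, h' - 1) (hill h') = run_matrix d0 d1 D (?\<alpha>, h - 1) (hill h')"
    using counter_run_shift[OF dec_ge prefix, of D] levels by simp_all
  have "counter_run d0 d1 (?\<alpha>, h' - 1) (hill h') = (?\<beta>, h' - 1)"
    using counter_run_hill[OF hh(2), of "length (hill h')"] length_hill[OF hh(2)] nest ends u by simp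
  then have "counter_run d0 d1 (?\<alpha>, h - 1) (hill h') = (?\<beta>, h - 1)"
    using shift(1) levels h by (metis add_diff_cancel_right' prod.collapse prod.inject)
  then have after_hill: "run d0 d1 D (cfg ?u) (hill h') = (vec_mat (weight ?u) (curry (hill_matrix h')), ?\<beta>, h - 1)"
    using shift(2) ends(1) u(1) by (simp add: cfg_eq run_eq hill_matrix_def)
  define w' where "w' = take ?u z @ hill h' @ drop ?d z"
  have "run d0 d1 D c0 w' = (splice_weight h (hill_matrix h'), state L, counter L)"
    using after_hill counter_run_drop[of ?d] u(4)
    by (simp add: w'_def run_append cfg_def[symmetric] run_eq splice_weight_def)
  moreover have "length w' < L"
    using nest length_hill[OF hh(2)] next_below(2)[of h] h j_less by (simp add: w'_def)
  ultimately show ?thesis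
    using no_shorter_witness[of w'] end_witness(2) by (simp add: witness_def)
qed

lemma card_levels_with_ends:
  "card {h \<in> levels. state (last_below h) = \<alpha> \<and> state (next_below h) = \<beta>} \<le> CARD('q) * CARD('q)"
proof -
  let ?H = "{h \<in> levels. state (last_below h) = \<alpha> \<and> state (next_below h) = \<beta>}"
  have "card ?H \<le> fv.dim (UNIV :: ('q \<times> 'q \<Rightarrow> 'a) set)"
  proof (rule card_le_dim_triangular[where v = hill_matrix and P = "\<lambda>h. {X. splice_weight h X \<in> V}"])
    show "finite ?H" by simp
    show "hill_matrix ` ?H \<subseteq> UNIV" by simp
    show "fv.subspace {X. splice_weight h X \<in> V}" for h
      by (rule subspace_splice_weight_vimage)
    show "hill_matrix h' \<in> {X. splice_weight h X \<in> V}" if "h \<in> ?H" "h' \<in> ?H" "h < h'" for h h'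
      using that splice_weight_exchange[of h h'] by simp
    show "hill_matrix h \<notin> {X. splice_weight h X \<in> V}" if "h \<in> ?H" for h
      using that splice_weight_hill[of h] end_witness(1) by simp
  qed
  also have "\<dots> \<le> CARD('q \<times> 'q)" by (rule fv_dim_le_card)
  finally show ?thesis by simp
qed

lemma counter_le_before_return: "counter s \<le> max (counter 0) 1 + (CARD('q) * CARD('c))^2"
proof -
  let ?cls = "\<lambda>(\<alpha>, \<beta>). {h \<in> levels. state (last_below h) = \<alpha> \<and> state (next_below h) = \<beta>}"
  have "levels = (\<Union>ab\<in>UNIV. ?cls ab)" by auto
  then have "card levels \<le> (\<Sum>ab\<in>UNIV. card (?cls ab))"
    by (simp add: card_UN_le)
  also have "\<dots> \<le> (\<Sum>ab\<in>(UNIV :: ('c \<times> 'c) set). CARD('q) * CARD('q))"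
  proof (rule sum_mono)
    fix ab :: "'c \<times> 'c"
    show "card (?cls ab) \<le> CARD('q) * CARD('q)"
      using card_levels_with_ends[of "fst ab" "snd ab"] by (simp add: case_prod_beta)
  qed
  also have "\<dots> = (CARD('q) * CARD('c))^2"
    by (simp add: power2_eq_square algebra_simps)
  finally show ?thesis by simp
qed

end

section \<open>The length bound\<close>

context min_witness
begin

lemma counter_le_if_zero_later:
  assumes "s \<le> j" "j < L" "counter j = 0"
  shows "counter s \<le> max (counter 0) 1 + (CARD('q) * CARD('c))^2"
proof -
  interpret min_witness_return d0 d1 D c0 V S z s j
    by (intro min_witness_return.intro min_witness_return_axioms.intro min_witness_axioms assms)
  show ?thesis by (rule counter_le_before_return)
qed

lemma counter_le_away_from_end:
  assumes "i + CARD('q) * CARD('c) \<le> L"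
  shows "counter i \<le> max (counter 0) 1 + (CARD('q) * CARD('c))^2"
proof (cases "\<exists>j. i \<le> j \<and> j < L \<and> counter j = 0")
  case True
  then show ?thesis using counter_le_if_zero_later by blast
next
  case False
  then have "\<not> CARD('q) * CARD('c) \<le> Suc (counter i)"
    using short_tail_if_counter_positive[of i] assms by auto
  moreover have "CARD('q) * CARD('c) \<le> (CARD('q) * CARD('c))^2"
    by (simp add: power2_eq_square)
  ultimately show ?thesis by linarith
qed

lemma length_bound:
  "L \<le> CARD('q) * CARD('c) * (max (counter 0) (CARD('q) * CARD('c)) + (CARD('q) * CARD('c))^2)"
proof -
  define K where "K = CARD('q) * CARD('c)"
  define B where "B = max (counter 0) 1 + K^2"
  obtain k where k: "K = Suc k"
    using not0_implies_Suc[of K] by (auto simp: K_def)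
  have "{..<L + 1 - K} \<subseteq> (\<Union>m\<in>{..B}. {i. i < L \<and> counter i = m})"
    using counter_le_away_from_end k by (auto simp: K_def B_def)
  then have "card {..<L + 1 - K} \<le> card (\<Union>m\<in>{..B}. {i. i < L \<and> counter i = m})"
    by (rule card_mono[rotated]) simp
  also have "\<dots> \<le> (\<Sum>m\<in>{..B}. card {i. i < L \<and> counter i = m})"
    by (rule card_UN_le) simp
  also have "\<dots> \<le> (\<Sum>m\<in>{..B}. k)"
    using card_level_visits_le k by (intro sum_mono) (simp add: K_def)
  finally have "L \<le> B * k + 2 * k" using k by simp
  also have "\<dots> \<le> (max (counter 0) K + K^2) * k + (max (counter 0) K + K^2)"
    using k by (intro add_mono mult_le_mono1) (auto simp: B_def power2_eq_square)
  also have "\<dots> = K * (max (counter 0) K + K^2)"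
    using k by (simp add: algebra_simps)
  finally show ?thesis by (simp add: K_def)
qed

end

theorem mainTheorem14:
  fixes \<delta>0 \<delta>1 :: "'c::finite \<Rightarrow> 's::finite \<Rightarrow> 'c \<times> int"
    and p0 :: 'c
    and lamv \<eta> :: "('q::finite, 'a::field) fvec"
    and \<Delta> :: "'s \<Rightarrow> nat \<Rightarrow> ('q,'a) fmat"
    and x :: "('q,'a) fvec" and p :: 'c and n :: nat
    and V :: "('q,'a) fvec set" and S :: "'c set" and z :: "'s list"
  assumes "wodca \<delta>0 \<delta>1 p0 lamv \<Delta> \<eta>"
    and "is_subspace V"
    and "minimal_witness \<delta>0 \<delta>1 \<Delta> (x, p, n) V S UNIV z"
  shows "length z \<le> (card (UNIV :: 'q set) * card (UNIV :: 'c set)) *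
           (max n (card (UNIV :: 'q set) * card (UNIV :: 'c set)) + (card (UNIV :: 'q set) * card (UNIV :: 'c set))^2)"
proof -
  interpret min_witness \<delta>0 \<delta>1 \<Delta> "(x, p, n)" V S z
    using assms by unfold_locales (auto simp: wodca_def fv_subspace_iff)
  have "counter 0 = n" by (simp add: counter_def cfg_def)
  then show ?thesis using length_bound by simp
qed

end
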